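(* Let $k$ be odd. A matching of size $k$ is an isolated vertex of $\mathbf{DCM}_k$ if and only if it is an I-matching.
   Context: Let $k\ge 1$ and let $X_{2k}=\{P_1,\dots,P_{2k}\}$ be $2k$ points in convex position in the plane, labeled in clockwise cyclic order; indices are taken modulo $2k$. A matching of $X_{2k}$ means a set of $k$ pairwise non-crossing straight segments (edges) with endpoints in $X_{2k}$ covering every point exactly once; its size is $k$. Two matchings $M,M'$ of $X_{2k}$ are disjoint compatible if they have no common edge and no edge of $M$ crosses an edge of $M'$. $\mathbf{DCM}_k$ is the graph whose vertices are the matchings of $X_{2k}$, two being adjacent iff they are disjoint compatible. A block of a matching $M$ is a pair of edges $\{P_iP_{i+3},P_{i+1}P_{i+2}\}\subseteq M$. If $K$ is a block of a matching $N$ of size $k+2$, then $N-K$ denotes the set $N\setminus K$, regarded as a matching of the remaining $2k$ points (which are in convex position) with their inherited cyclic order, i.e. as a matching of size $k$ defined up to cyclic relabeling. I-matchings are defined recursively: the unique matching of size $1$ is an I-matching; for odd $k\ge 3$, a matching $N$ of size $k$ is an I-matching iff it has a block $K$ such that $N-K$ is an I-matching (this notion is invariant under cyclic relabeling). *)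

theory Defs
  imports Main
begin

text \<open>Points of X_{2k} are labelled 0,...,2k-1 in (clockwise) cyclic order.  Two chords of a convex
  polygon with four distinct endpoints cross iff their endpoints interleave.\<close>

definition crosses :: "nat set \<Rightarrow> nat set \<Rightarrow> bool" where
  "crosses e f \<longleftrightarrow> (\<exists>a b c d. a < c \<and> c < b \<and> b < d \<and>
      ((e = {a,b} \<and> f = {c,d}) \<or> (e = {c,d} \<and> f = {a,b})))"

definition is_matching :: "nat \<Rightarrow> nat set set \<Rightarrow> bool" where
  "is_matching k M \<longleftrightarrow>
     (\<forall>e\<in>M. \<exists>a b. a \<noteq> b \<and> a < 2*k \<and> b < 2*k \<and> e = {a,b}) \<and>
     (\<forall>p<2*k. \<exists>!e. e \<in> M \<and> p \<in> e) \<and>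
     (\<forall>e\<in>M. \<forall>f\<in>M. \<not> crosses e f)"

definition disjoint_compatible :: "nat set set \<Rightarrow> nat set set \<Rightarrow> bool" where
  "disjoint_compatible M M' \<longleftrightarrow> M \<inter> M' = {} \<and> (\<forall>e\<in>M. \<forall>f\<in>M'. \<not> crosses e f)"

definition isolated_DCM :: "nat \<Rightarrow> nat set set \<Rightarrow> bool" where
  "isolated_DCM k M \<longleftrightarrow> is_matching k M \<and>
     \<not> (\<exists>M'. is_matching k M' \<and> disjoint_compatible M M')"

definition block_edges :: "nat \<Rightarrow> nat \<Rightarrow> nat set set" where
  "block_edges k i = {{i mod (2*k), (i+3) mod (2*k)}, {(i+1) mod (2*k), (i+2) mod (2*k)}}"

text \<open>Relabelling of the remaining 2k-4 points after deleting the points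
  i,i+1,i+2,i+3: point i+4+j (mod 2k) becomes j, followed by an arbitrary
  cyclic rotation by s (so N-K is taken up to cyclic relabelling).\<close>
definition shrink :: "nat \<Rightarrow> nat \<Rightarrow> nat \<Rightarrow> nat \<Rightarrow> nat" where
  "shrink k i s p = ((p + 4*k - i - 4) mod (2*k) + s) mod (2*k - 4)"

definition remove_block :: "nat \<Rightarrow> nat \<Rightarrow> nat \<Rightarrow> nat set set \<Rightarrow> nat set set" where
  "remove_block k i s N = (\<lambda>e. shrink k i s ` e) ` (N - block_edges k i)"

inductive I_matching :: "nat \<Rightarrow> nat set set \<Rightarrow> bool" where
  base: "I_matching 1 {{0,1}}"
| step: "\<lbrakk> odd k; k \<ge> 3; is_matching k N; i < 2*k; block_edges k i \<subseteq> N;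
           I_matching (k - 2) (remove_block k i s N) \<rbrakk> \<Longrightarrow> I_matching k N"

end

theory Submission
  imports Defs
begin

text \<open>
  Work with non-crossing perfect matchings of arbitrary finite point sets of labels and say that
  a matching has a partner if some disjoint compatible perfect matching of the same points exists.
  Cyclic rotations and order-preserving relabellings preserve crossings, hence the existence of
  a partner; so blocks and ears may be assumed to start at label 0.

  A block \<open>{03, 12}\<close> forces every partner to contain the ears \<open>01\<close> and \<open>23\<close>, and
  conversely a partner of the rest extends by these two ears; so deleting a block does not change
  the existence of a partner. Every matching on at least four points contains a block or two
  consecutive ears \<open>{01, 23}\<close>. In the latter case a partner of the matching with both ears
  deleted, or with only the first one deleted, yields a partner of the whole matching. Hence an
  isolated matching with two consecutive ears would give isolated matchings of sizes
  \<open>k - 2\<close> and \<open>k - 1\<close>, which by induction are I-matchings and thus both of odd size, which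
  is absurd. Induction on \<open>k\<close> now shows that the isolated matchings are exactly the
  I-matchings, for every \<open>k\<close>: for even \<open>k\<close> both sides are false.
\<close>

subsection \<open>Crossing chords\<close>

lemma crosses_commute: "crosses e f \<longleftrightarrow> crosses f e"
  unfolding crosses_def by blast

lemma crosses_interleaved: "a < c \<Longrightarrow> c < b \<Longrightarrow> b < d \<Longrightarrow> crosses {a,b} {c,d}"
  unfolding crosses_def by blast

lemma crosses_ordered_iff:
  "a < b \<Longrightarrow> c < d \<Longrightarrow> crosses {a,b} {c,d} \<longleftrightarrow> a < c \<and> c < b \<and> b < d \<or> c < a \<and> a < d \<and> d < b"
  unfolding crosses_def doubleton_eq_iff by (rule iffI; elim exE disjE conjE; force)

lemma crosses_less_iff:
  assumes "a < b"
  shows "crosses {a,b} {c,d} \<longleftrightarrow>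
    c \<noteq> d \<and> c \<notin> {a,b} \<and> d \<notin> {a,b} \<and> (a < c \<and> c < b \<longleftrightarrow> \<not> (a < d \<and> d < b))"
proof (cases c d rule: linorder_cases)
  case less
  then show ?thesis using assms by (simp add: crosses_ordered_iff) linarith
next
  case equal
  then show ?thesis unfolding crosses_def by auto
next
  case greater
  then show ?thesis using assms by (simp add: crosses_ordered_iff insert_commute[of c d]) linarith
qed

definition between :: "nat \<Rightarrow> nat \<Rightarrow> nat \<Rightarrow> bool" where
  "between x a b \<longleftrightarrow> min a b < x \<and> x < max a b"

lemma crosses_between_iff:
  "crosses {a,b} {c,d} \<longleftrightarrow>
     a \<noteq> b \<and> c \<noteq> d \<and> c \<notin> {a,b} \<and> d \<notin> {a,b} \<and> (between c a b \<longleftrightarrow> \<not> between d a b)"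
proof (cases a b rule: linorder_cases)
  case less
  then show ?thesis unfolding crosses_less_iff[OF less] between_def by auto
next
  case equal
  then show ?thesis unfolding crosses_def by auto
next
  case greater
  then show ?thesis
    unfolding insert_commute[of a b] crosses_less_iff[OF greater] between_def by auto
qed

lemma rotate_eq:
  assumes "x < n" "r < (n::nat)"
  shows "(x + r) mod n = (if x + r < n then x + r else x + r - n)"
  using assms by (auto simp: le_mod_geq not_less)

text \<open>Under a rotation of the labels, "between \<open>a\<close> and \<open>b\<close>" flips for every other point exactly
  when one of \<open>a\<close>, \<open>b\<close> wraps around past \<open>n - 1\<close>; crossing compares the betweenness of
  \<open>c\<close> and \<open>d\<close>, so it is unaffected.\<close>

lemma between_rotate_iff:
  assumes "x < n" "a < n" "b < n" "x \<noteq> a" "x \<noteq> b" "r < n"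
  shows "between ((x + r) mod n) ((a + r) mod n) ((b + r) mod n) \<longleftrightarrow>
    (between x a b \<longleftrightarrow> (a + r < n \<longleftrightarrow> b + r < n))"
  using assms unfolding rotate_eq[OF assms(1,6)] rotate_eq[OF assms(2,6)] rotate_eq[OF assms(3,6)] between_def
  by (cases "x + r < n"; cases "a + r < n"; cases "b + r < n"; simp; linarith)

lemma crosses_rotate_iff:
  assumes "a < n" "b < n" "c < n" "d < n"
  shows "crosses {(a + r) mod n, (b + r) mod n} {(c + r) mod n, (d + r) mod n} \<longleftrightarrow> crosses {a,b} {c,d}"
proof -
  have "(x + r) mod n = (x + r mod n) mod n" for x
    by (simp add: mod_add_right_eq)
  moreover have "r mod n < n"
    using assms by simp
  moreover have "(x + r') mod n = (y + r') mod n \<longleftrightarrow> x = y" if "x < n" "y < n" "r' < n" for x y r'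
    using that by (auto simp: rotate_eq)
  ultimately show ?thesis
    using assms unfolding crosses_between_iff
    by (smt (verit) between_rotate_iff insert_iff singletonD)
qed

lemma not_crosses_consecutive: "\<not> crosses {p, Suc p} f" "\<not> crosses f {p, Suc p}"
  unfolding crosses_def doubleton_eq_iff by auto

lemma crosses_irrefl: "\<not> crosses e e"
  unfolding crosses_def by auto

lemma not_crosses_separated: "\<forall>x\<in>e. \<forall>y\<in>f. x < y \<Longrightarrow> \<not> crosses e f \<and> \<not> crosses f e"
  unfolding crosses_def by (auto simp: doubleton_eq_iff)

definition preserves_crossing :: "(nat \<Rightarrow> nat) \<Rightarrow> nat set \<Rightarrow> bool" where
  "preserves_crossing \<phi> P \<longleftrightarrow>
     (\<forall>a\<in>P. \<forall>b\<in>P. \<forall>c\<in>P. \<forall>d\<in>P. crosses {\<phi> a, \<phi> b} {\<phi> c, \<phi> d} \<longleftrightarrow> crosses {a,b} {c,d})"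

lemma preserves_crossing_strict_mono_on:
  assumes "strict_mono_on P \<phi>"
  shows "preserves_crossing \<phi> P"
proof -
  have "between (\<phi> x) (\<phi> a) (\<phi> b) \<longleftrightarrow> between x a b" if "x \<in> P" "a \<in> P" "b \<in> P" for x a b
    using that strict_mono_on_less[OF assms] strict_mono_on_less_eq[OF assms]
    unfolding between_def min_def max_def by auto
  moreover have "inj_on \<phi> P"
    using assms by (rule strict_mono_on_imp_inj_on)
  ultimately show ?thesis
    unfolding preserves_crossing_def crosses_between_iff by (auto simp: inj_on_eq_iff)
qed

lemma preserves_crossing_rotate: "preserves_crossing (\<lambda>p. (p + r) mod n) {..<n}"
  unfolding preserves_crossing_def lessThan_iff using crosses_rotate_iff by blast

lemma bij_betw_rotate: "bij_betw (\<lambda>p. (p + r) mod n) {..<n} {..<n::nat}"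
proof (cases "n = 0")
  case False
  have "inj_on (\<lambda>p. (p + r) mod n) {..<n}"
  proof (rule inj_onI)
    fix x y assume "x \<in> {..<n}" "y \<in> {..<n}" "(x + r) mod n = (y + r) mod n"
    then have "(x + r mod n) mod n = (y + r mod n) mod n"
      by (simp add: mod_add_right_eq)
    then show "x = y"
      using \<open>x \<in> {..<n}\<close> \<open>y \<in> {..<n}\<close> False by (auto simp: rotate_eq split: if_splits)
  qed
  moreover have "(\<lambda>p. (p + r) mod n) ` {..<n} \<subseteq> {..<n}"
    using False by auto
  ultimately show ?thesis
    unfolding bij_betw_def by (simp add: endo_inj_surj)
qed (simp add: bij_betw_def)

lemma rotate_back: "a < n \<Longrightarrow> j < n \<Longrightarrow> ((a + j) mod n + (n - a)) mod n = (j::nat)"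
  by (metis add.commute add.left_commute le_add_diff_inverse less_imp_le mod_add_left_eq
      mod_add_self2 mod_less)

subsection \<open>Non-crossing perfect matchings of arbitrary point sets\<close>

definition perfect_matching_on :: "nat set \<Rightarrow> nat set set \<Rightarrow> bool" where
  "perfect_matching_on P M \<longleftrightarrow>
     (\<forall>e\<in>M. \<exists>a b. a \<noteq> b \<and> a \<in> P \<and> b \<in> P \<and> e = {a,b}) \<and>
     (\<forall>p\<in>P. \<exists>!e. e \<in> M \<and> p \<in> e) \<and> (\<forall>e\<in>M. \<forall>f\<in>M. \<not> crosses e f)"

definition has_partner :: "nat set \<Rightarrow> nat set set \<Rightarrow> bool" where
  "has_partner P M \<longleftrightarrow> (\<exists>M'. perfect_matching_on P M' \<and> disjoint_compatible M M')"

lemma is_matching_iff: "is_matching k M \<longleftrightarrow> perfect_matching_on {..<2*k} M"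
  unfolding is_matching_def perfect_matching_on_def Ball_def lessThan_iff by simp

lemma isolated_DCM_iff: "isolated_DCM k M \<longleftrightarrow> is_matching k M \<and> \<not> has_partner {..<2*k} M"
  unfolding isolated_DCM_def has_partner_def is_matching_iff ..

context
  fixes P M assumes M: "perfect_matching_on P M"
begin

lemma perfect_matching_on_edge: "e \<in> M \<Longrightarrow> \<exists>a b. a \<noteq> b \<and> a \<in> P \<and> b \<in> P \<and> e = {a,b}"
  using M unfolding perfect_matching_on_def by blast

lemma perfect_matching_on_edge_subset: "e \<in> M \<Longrightarrow> e \<subseteq> P"
  using perfect_matching_on_edge by blast

lemma perfect_matching_on_partner:
  assumes "e \<in> M" "x \<in> e"
  shows "\<exists>y. y \<noteq> x \<and> y \<in> P \<and> e = {x,y}"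
proof -
  obtain a b where "a \<noteq> b" "a \<in> P" "b \<in> P" "e = {a,b}"
    using perfect_matching_on_edge[OF assms(1)] by blast
  then show ?thesis
    using assms(2) by (auto simp: insert_commute)
qed

lemma perfect_matching_on_unique: "e \<in> M \<Longrightarrow> f \<in> M \<Longrightarrow> p \<in> e \<Longrightarrow> p \<in> f \<Longrightarrow> e = f"
  using M perfect_matching_on_edge_subset unfolding perfect_matching_on_def by blast

lemma perfect_matching_on_cover: "p \<in> P \<Longrightarrow> \<exists>e\<in>M. p \<in> e"
  using M unfolding perfect_matching_on_def by blast

lemma perfect_matching_on_not_crosses: "e \<in> M \<Longrightarrow> f \<in> M \<Longrightarrow> \<not> crosses e f"
  using M unfolding perfect_matching_on_def by blast

end

lemma perfect_matching_on_mate: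
  assumes "perfect_matching_on P M" "x \<in> P"
  shows "\<exists>y. y \<noteq> x \<and> y \<in> P \<and> {x,y} \<in> M"
  using perfect_matching_on_cover[OF assms] perfect_matching_on_partner[OF assms(1)] by blast

lemma perfect_matching_onI:
  assumes "\<And>e. e \<in> M \<Longrightarrow> \<exists>a b. a \<noteq> b \<and> a \<in> P \<and> b \<in> P \<and> e = {a,b}"
    and "\<And>p. p \<in> P \<Longrightarrow> \<exists>e\<in>M. p \<in> e"
    and "\<And>e f p. e \<in> M \<Longrightarrow> f \<in> M \<Longrightarrow> p \<in> e \<Longrightarrow> p \<in> f \<Longrightarrow> e = f"
    and "\<And>e f. e \<in> M \<Longrightarrow> f \<in> M \<Longrightarrow> \<not> crosses e f"
  shows "perfect_matching_on P M"
  unfolding perfect_matching_on_def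
proof (intro conjI ballI)
  fix p assume "p \<in> P"
  then obtain e where "e \<in> M" "p \<in> e"
    using assms(2) by blast
  then show "\<exists>!e. e \<in> M \<and> p \<in> e"
    using assms(3) by blast
qed (use assms in blast)+

lemma perfect_matching_on_diff:
  assumes M: "perfect_matching_on P M" and "S \<subseteq> M"
  shows "perfect_matching_on (P - \<Union>S) (M - S)"
proof (rule perfect_matching_onI)
  fix e assume e: "e \<in> M - S"
  then obtain a b where "a \<noteq> b" "a \<in> P" "b \<in> P" "e = {a,b}"
    using perfect_matching_on_edge[OF M] by blast
  moreover have "a \<notin> \<Union>S" "b \<notin> \<Union>S"
    using e \<open>e = {a,b}\<close> \<open>S \<subseteq> M\<close> perfect_matching_on_unique[OF M] by blast+
  ultimately show "\<exists>a b. a \<noteq> b \<and> a \<in> P - \<Union>S \<and> b \<in> P - \<Union>S \<and> e = {a,b}"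
    by blast
next
  fix p assume "p \<in> P - \<Union>S"
  then show "\<exists>e\<in>M - S. p \<in> e"
    using perfect_matching_on_cover[OF M] by blast
next
  fix e f p assume "e \<in> M - S" "f \<in> M - S" "p \<in> e" "p \<in> f"
  then show "e = f"
    using perfect_matching_on_unique[OF M] by blast
next
  fix e f assume "e \<in> M - S" "f \<in> M - S"
  then show "\<not> crosses e f"
    using perfect_matching_on_not_crosses[OF M] by blast
qed

lemma perfect_matching_on_Un:
  assumes A: "perfect_matching_on A M" and B: "perfect_matching_on B N" and "A \<inter> B = {}"
    and "\<And>e f. e \<in> M \<Longrightarrow> f \<in> N \<Longrightarrow> \<not> crosses e f \<and> \<not> crosses f e"
  shows "perfect_matching_on (A \<union> B) (M \<union> N)"
proof (rule perfect_matching_onI)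
  fix e assume "e \<in> M \<union> N"
  then show "\<exists>a b. a \<noteq> b \<and> a \<in> A \<union> B \<and> b \<in> A \<union> B \<and> e = {a,b}"
    using perfect_matching_on_edge[OF A] perfect_matching_on_edge[OF B] by blast
next
  fix p assume "p \<in> A \<union> B"
  then show "\<exists>e\<in>M \<union> N. p \<in> e"
    using perfect_matching_on_cover[OF A] perfect_matching_on_cover[OF B] by blast
next
  fix e f p assume "e \<in> M \<union> N" "f \<in> M \<union> N" "p \<in> e" "p \<in> f"
  moreover have "e \<subseteq> A" if "e \<in> M" for e
    using perfect_matching_on_edge_subset[OF A that] .
  moreover have "e \<subseteq> B" if "e \<in> N" for e
    using perfect_matching_on_edge_subset[OF B that] .
  ultimately show "e = f"
    using perfect_matching_on_unique[OF A] perfect_matching_on_unique[OF B] \<open>A \<inter> B = {}\<close>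
    by blast
next
  fix e f assume "e \<in> M \<union> N" "f \<in> M \<union> N"
  then show "\<not> crosses e f"
    using perfect_matching_on_not_crosses[OF A] perfect_matching_on_not_crosses[OF B] assms(4)
    by blast
qed

lemma perfect_matching_on_empty: "perfect_matching_on {} {}"
  unfolding perfect_matching_on_def by simp

lemma perfect_matching_on_two_edges:
  assumes "distinct [a, b, c, d]" "\<not> crosses {a,b} {c,d}"
  shows "perfect_matching_on {a,b,c,d} {{a,b},{c,d}}"
proof (rule perfect_matching_onI)
  fix e f assume "e \<in> {{a,b},{c,d}}" "f \<in> {{a,b},{c,d}}"
  then show "\<not> crosses e f"
    using assms(2) crosses_commute[of "{a,b}" "{c,d}"] crosses_irrefl by blast
qed (use assms(1) in auto)

subsection \<open>Relabelling matchings along crossing-preserving bijections\<close>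

definition relabel :: "(nat \<Rightarrow> nat) \<Rightarrow> nat set set \<Rightarrow> nat set set" where
  "relabel \<phi> M = (\<lambda>e. \<phi> ` e) ` M"

lemma relabel_relabel: "relabel \<psi> (relabel \<phi> M) = relabel (\<psi> \<circ> \<phi>) M"
  unfolding relabel_def by (simp add: image_image image_comp)

lemma relabel_memE:
  assumes "e \<in> relabel \<phi> M" "perfect_matching_on P M"
  obtains a b where "{a,b} \<in> M" "a \<noteq> b" "a \<in> P" "b \<in> P" "e = {\<phi> a, \<phi> b}"
proof -
  obtain e0 where "e0 \<in> M" "e = \<phi> ` e0"
    using assms(1) unfolding relabel_def by blast
  moreover obtain a b where "a \<noteq> b" "a \<in> P" "b \<in> P" "e0 = {a,b}"
    using perfect_matching_on_edge[OF assms(2) \<open>e0 \<in> M\<close>] by blast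
  ultimately show thesis
    using that by simp
qed

lemma relabel_perfect_matching_on:
  assumes bij: "bij_betw \<phi> P Q" and \<phi>: "preserves_crossing \<phi> P"
    and M: "perfect_matching_on P M"
  shows "perfect_matching_on Q (relabel \<phi> M)"
proof -
  have inj: "inj_on \<phi> P" and img: "\<phi> ` P = Q"
    using bij unfolding bij_betw_def by auto
  show ?thesis
  proof (rule perfect_matching_onI)
    fix e assume "e \<in> relabel \<phi> M"
    then obtain a b where "{a,b} \<in> M" "a \<noteq> b" "a \<in> P" "b \<in> P" "e = {\<phi> a, \<phi> b}"
      using M by (rule relabel_memE)
    then show "\<exists>a b. a \<noteq> b \<and> a \<in> Q \<and> b \<in> Q \<and> e = {a,b}"
      using inj img by (intro exI[of _ "\<phi> a"] exI[of _ "\<phi> b"]) (auto simp: inj_on_eq_iff)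
  next
    fix q assume "q \<in> Q"
    then obtain p where "p \<in> P" "q = \<phi> p"
      using img by blast
    moreover obtain e where "e \<in> M" "p \<in> e"
      using perfect_matching_on_cover[OF M \<open>p \<in> P\<close>] by blast
    ultimately show "\<exists>e\<in>relabel \<phi> M. q \<in> e"
      unfolding relabel_def by blast
  next
    fix e f q assume "e \<in> relabel \<phi> M" "f \<in> relabel \<phi> M" "q \<in> e" "q \<in> f"
    then obtain e0 f0 x y where "e0 \<in> M" "f0 \<in> M" "e = \<phi> ` e0" "f = \<phi> ` f0"
      and "x \<in> e0" "y \<in> f0" "\<phi> x = \<phi> y"
      unfolding relabel_def by blast
    moreover from calculation have "x \<in> P" "y \<in> P"
      using perfect_matching_on_edge_subset[OF M] by blast+
    ultimately show "e = f"
      using perfect_matching_on_unique[OF M] inj_onD[OF inj] by metis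
  next
    fix e f assume "e \<in> relabel \<phi> M" "f \<in> relabel \<phi> M"
    obtain a b where "{a,b} \<in> M" "a \<noteq> b" "a \<in> P" "b \<in> P" "e = {\<phi> a, \<phi> b}"
      using \<open>e \<in> relabel \<phi> M\<close> M by (rule relabel_memE)
    moreover obtain c d where "{c,d} \<in> M" "c \<noteq> d" "c \<in> P" "d \<in> P" "f = {\<phi> c, \<phi> d}"
      using \<open>f \<in> relabel \<phi> M\<close> M by (rule relabel_memE)
    ultimately show "\<not> crosses e f"
      using \<phi> perfect_matching_on_not_crosses[OF M] unfolding preserves_crossing_def by simp
  qed
qed

lemma relabel_disjoint_compatible:
  assumes inj: "inj_on \<phi> P" and \<phi>: "preserves_crossing \<phi> P"
    and M: "perfect_matching_on P M" and M': "perfect_matching_on P M'"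
    and dc: "disjoint_compatible M M'"
  shows "disjoint_compatible (relabel \<phi> M) (relabel \<phi> M')"
  unfolding disjoint_compatible_def
proof (intro conjI ballI equals0I)
  fix e assume "e \<in> relabel \<phi> M \<inter> relabel \<phi> M'"
  then obtain e0 f0 where "e0 \<in> M" "f0 \<in> M'" "\<phi> ` e0 = \<phi> ` f0"
    unfolding relabel_def by blast
  moreover from calculation have "e0 = f0"
    using perfect_matching_on_edge_subset[OF M] perfect_matching_on_edge_subset[OF M'] inj
    by (metis inj_on_image_eq_iff)
  ultimately show False
    using dc unfolding disjoint_compatible_def by blast
next
  fix e f assume "e \<in> relabel \<phi> M" "f \<in> relabel \<phi> M'"
  then obtain e0 f0 where "e0 \<in> M" "f0 \<in> M'" "e = \<phi> ` e0" "f = \<phi> ` f0"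
    unfolding relabel_def by blast
  moreover obtain a b c d where "e0 = {a,b}" "f0 = {c,d}" "{a,b} \<subseteq> P" "{c,d} \<subseteq> P"
    using perfect_matching_on_edge[OF M \<open>e0 \<in> M\<close>] perfect_matching_on_edge[OF M' \<open>f0 \<in> M'\<close>]
    by blast
  ultimately show "\<not> crosses e f"
    using \<phi> dc unfolding preserves_crossing_def disjoint_compatible_def by simp
qed

lemma relabel_inv_into:
  assumes "inj_on \<phi> P" "perfect_matching_on P M"
  shows "relabel (inv_into P \<phi>) (relabel \<phi> M) = M"
proof -
  have "inv_into P \<phi> ` \<phi> ` e = e" if "e \<in> M" for e
    using assms perfect_matching_on_edge_subset[OF assms(2) that] by (simp add: inv_into_image_cancel)
  then show ?thesis
    unfolding relabel_def image_image by simp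
qed

lemma preserves_crossing_inv_into:
  assumes "bij_betw \<phi> P Q" "preserves_crossing \<phi> P"
  shows "preserves_crossing (inv_into P \<phi>) Q"
proof -
  have "inv_into P \<phi> x \<in> P \<and> \<phi> (inv_into P \<phi> x) = x" if "x \<in> Q" for x
    using assms(1) that by (meson bij_betw_apply bij_betw_inv_into bij_betw_inv_into_right)
  then show ?thesis
    using assms(2) unfolding preserves_crossing_def by metis
qed

lemma has_partner_relabel_iff:
  assumes bij: "bij_betw \<phi> P Q" and \<phi>: "preserves_crossing \<phi> P"
    and M: "perfect_matching_on P M"
  shows "has_partner Q (relabel \<phi> M) \<longleftrightarrow> has_partner P M"
proof
  assume "has_partner P M"
  then show "has_partner Q (relabel \<phi> M)"
    using relabel_perfect_matching_on[OF bij \<phi>] relabel_disjoint_compatible[OF _ \<phi> M] bij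
    unfolding has_partner_def bij_betw_def by blast
next
  let ?\<psi> = "inv_into P \<phi>"
  have bij': "bij_betw ?\<psi> Q P" and \<psi>: "preserves_crossing ?\<psi> Q"
    using bij_betw_inv_into[OF bij] preserves_crossing_inv_into[OF bij \<phi>] .
  assume "has_partner Q (relabel \<phi> M)"
  then obtain N where "perfect_matching_on Q N" "disjoint_compatible (relabel \<phi> M) N"
    unfolding has_partner_def by blast
  then have "perfect_matching_on P (relabel ?\<psi> N)"
    and "disjoint_compatible (relabel ?\<psi> (relabel \<phi> M)) (relabel ?\<psi> N)"
    using relabel_perfect_matching_on[OF bij' \<psi>] relabel_perfect_matching_on[OF bij \<phi> M]
      relabel_disjoint_compatible[OF _ \<psi>] bij' unfolding bij_betw_def by blast+
  then show "has_partner P M"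
    unfolding has_partner_def relabel_inv_into[OF bij_betw_imp_inj_on[OF bij] M] by blast
qed

lemma relabel_diff:
  assumes "inj_on \<phi> P" "perfect_matching_on P M"
  shows "relabel \<phi> (M - S) = relabel \<phi> M - relabel \<phi> (M \<inter> S)"
proof -
  have "inj_on (\<lambda>e. \<phi> ` e) M"
    using assms perfect_matching_on_edge_subset[OF assms(2)]
    by (intro inj_onI) (metis inj_on_image_eq_iff)
  then show ?thesis
    unfolding relabel_def by (auto simp: inj_on_eq_iff)
qed

lemma bij_betw_shift_down: "bij_betw (\<lambda>p. p - c) {c..<n} {..<n - (c::nat)}"
proof (rule bij_betwI')
  fix y assume "y \<in> {..<n - c}"
  then show "\<exists>x\<in>{c..<n}. y = x - c"
    by (intro bexI[of _ "y + c"]) auto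
qed auto

lemma relabel_shift_down:
  assumes "perfect_matching_on {c..<n} M"
  shows "perfect_matching_on {..<n - c} (relabel (\<lambda>p. p - c) M)"
    and "has_partner {..<n - c} (relabel (\<lambda>p. p - c) M) \<longleftrightarrow> has_partner {c..<n} M"
proof -
  have "strict_mono_on {c..<n} (\<lambda>p. p - c)"
    by (rule strict_mono_onI) auto
  then have "preserves_crossing (\<lambda>p. p - c) {c..<n}"
    by (rule preserves_crossing_strict_mono_on)
  then show "perfect_matching_on {..<n - c} (relabel (\<lambda>p. p - c) M)"
    and "has_partner {..<n - c} (relabel (\<lambda>p. p - c) M) \<longleftrightarrow> has_partner {c..<n} M"
    using relabel_perfect_matching_on[OF bij_betw_shift_down _ assms]
      has_partner_relabel_iff[OF bij_betw_shift_down _ assms] by simp_all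
qed

lemma relabel_rotate:
  assumes "perfect_matching_on {..<n} M"
  shows "perfect_matching_on {..<n} (relabel (\<lambda>p. (p + r) mod n) M)"
    and "has_partner {..<n} (relabel (\<lambda>p. (p + r) mod n) M) \<longleftrightarrow> has_partner {..<n} M"
  using relabel_perfect_matching_on[OF bij_betw_rotate preserves_crossing_rotate assms]
    has_partner_relabel_iff[OF bij_betw_rotate preserves_crossing_rotate assms] by simp_all

lemma has_partner_Un:
  assumes sep: "\<forall>a\<in>A. \<forall>b\<in>B. a < b"
    and M: "perfect_matching_on A M" and N: "perfect_matching_on B N"
    and "has_partner A M" "has_partner B N"
  shows "has_partner (A \<union> B) (M \<union> N)"
proof -
  obtain M' N' where M': "perfect_matching_on A M'" "disjoint_compatible M M'"
    and N': "perfect_matching_on B N'" "disjoint_compatible N N'"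
    using assms(4,5) unfolding has_partner_def by blast
  have inA: "e \<subseteq> A" if "e \<in> M \<union> M'" for e
    using that perfect_matching_on_edge_subset[OF M] perfect_matching_on_edge_subset[OF M'(1)] by blast
  have inB: "e \<subseteq> B" if "e \<in> N \<union> N'" for e
    using that perfect_matching_on_edge_subset[OF N] perfect_matching_on_edge_subset[OF N'(1)] by blast
  have nonempty: "e \<noteq> {}" if "e \<in> M \<union> N" for e
    using that perfect_matching_on_edge[OF M] perfect_matching_on_edge[OF N] by blast
  have apart: "\<not> crosses e f \<and> \<not> crosses f e" if "e \<in> M \<union> M'" "f \<in> N \<union> N'" for e f
    using not_crosses_separated sep inA[OF that(1)] inB[OF that(2)] by (meson subsetD)
  have "A \<inter> B = {}"
    using sep by blast
  have "perfect_matching_on (A \<union> B) (M' \<union> N')"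
    using apart by (intro perfect_matching_on_Un[OF M'(1) N'(1) \<open>A \<inter> B = {}\<close>]) blast
  moreover have "disjoint_compatible (M \<union> N) (M' \<union> N')"
    unfolding disjoint_compatible_def
  proof (intro conjI ballI equals0I)
    fix e assume e: "e \<in> (M \<union> N) \<inter> (M' \<union> N')"
    show False
    proof (cases "e \<in> M")
      case True
      then have "e \<notin> M'"
        using M'(2) unfolding disjoint_compatible_def by blast
      then have "e \<subseteq> A \<inter> B"
        using e True inA inB by blast
      then show False
        using nonempty True \<open>A \<inter> B = {}\<close> by blast
    next
      case False
      then have "e \<in> N" "e \<notin> N'"
        using e N'(2) unfolding disjoint_compatible_def by blast+
      then have "e \<subseteq> A \<inter> B"
        using e inA inB by blast
      then show False
        using nonempty \<open>e \<in> N\<close> \<open>A \<inter> B = {}\<close> by blast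
    qed
  next
    fix e f assume "e \<in> M \<union> N" "f \<in> M' \<union> N'"
    then consider "e \<in> M" "f \<in> M'" | "e \<in> N" "f \<in> N'" | "e \<in> M" "f \<in> N'" | "e \<in> N" "f \<in> M'"
      by blast
    then show "\<not> crosses e f"
      using M'(2) N'(2) apart unfolding disjoint_compatible_def by cases blast+
  qed
  ultimately show ?thesis
    unfolding has_partner_def by blast
qed

lemma four_points_eq: "{0,1,2,3} = {..<4::nat}" "{0,3,1,2} = {..<4::nat}"
  by auto

lemma perfect_matching_on_four_points:
  "perfect_matching_on {..<4} {{0,1},{2,3}}" "perfect_matching_on {..<4} {{0,3},{1,2}}"
  using perfect_matching_on_two_edges[of 0 1 2 3] perfect_matching_on_two_edges[of 0 3 1 2]
  unfolding four_points_eq by (simp_all add: crosses_between_iff between_def)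

lemma has_partner_four_points:
  "has_partner {..<4} {{0,1},{2,3}}" "has_partner {..<4} {{0,3},{1,2}}"
proof -
  have "{{0,1},{2,3}} \<inter> {{0,3},{1,2::nat}} = {}" "{{0,3},{1,2}} \<inter> {{0,1},{2,3::nat}} = {}"
    by (simp_all add: doubleton_eq_iff)
  then have "disjoint_compatible {{0,1},{2,3}} {{0,3},{1,2::nat}}"
    and "disjoint_compatible {{0,3},{1,2}} {{0,1},{2,3::nat}}"
    unfolding disjoint_compatible_def by (simp_all add: crosses_between_iff between_def)
  then show "has_partner {..<4} {{0,1},{2,3}}" "has_partner {..<4} {{0,3},{1,2}}"
    unfolding has_partner_def using perfect_matching_on_four_points by blast+
qed

lemma perfect_matching_on_Union: "perfect_matching_on P M \<Longrightarrow> \<Union>M = P"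
  using perfect_matching_on_edge_subset perfect_matching_on_cover by blast

lemma perfect_matching_on_remove_first_four:
  assumes R: "perfect_matching_on {..<n} R" and X: "perfect_matching_on {..<4} X" "X \<subseteq> R"
  shows "perfect_matching_on {4..<n} (R - X)"
proof -
  have "{..<n} - \<Union>X = {4..<n}"
    unfolding perfect_matching_on_Union[OF X(1)] by auto
  then show ?thesis
    using perfect_matching_on_diff[OF R X(2)] by simp
qed

lemma has_partner_if_first_four_removed:
  assumes R: "perfect_matching_on {..<n} R" and X: "perfect_matching_on {..<4} X" "X \<subseteq> R"
    and "has_partner {..<4} X" and "has_partner {4..<n} (R - X)"
  shows "has_partner {..<n} R"
proof -
  have "3 \<in> \<Union>X"
    unfolding perfect_matching_on_Union[OF X(1)] by simp
  then have "3 \<in> \<Union>R"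
    using X(2) by blast
  then have "{..<4} \<union> {4..<n} = {..<n}"
    unfolding perfect_matching_on_Union[OF R] by auto
  moreover have "X \<union> (R - X) = R"
    using X(2) by blast
  moreover have "\<forall>a\<in>{..<4}. \<forall>b\<in>{4..<n}. a < b"
    by simp
  ultimately show ?thesis
    using has_partner_Un[OF _ X(1) perfect_matching_on_remove_first_four[OF R X] assms(4,5)] by simp
qed

subsection \<open>Blocks and ears\<close>

lemma block_forces_ears_in_partner:
  assumes R: "perfect_matching_on {..<n} R" and "{0,3} \<in> R" "{1,2} \<in> R"
    and M': "perfect_matching_on {..<n} M'" and dc: "disjoint_compatible R M'"
  shows "{0,1} \<in> M'" "{2,3} \<in> M'"
proof -
  have "3 < n"
    using perfect_matching_on_edge_subset[OF R \<open>{0,3} \<in> R\<close>] by simp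
  have partner: "\<exists>q\<in>{0,3}. {x,q} \<in> M'" if x: "x = 1 \<or> x = 2" for x
  proof -
    obtain q where q: "q \<noteq> x" "{x,q} \<in> M'"
      using perfect_matching_on_mate[OF M', of x] x \<open>3 < n\<close> by auto
    have "{x,q} \<noteq> {1,2}"
      using dc \<open>{1,2} \<in> R\<close> q(2) unfolding disjoint_compatible_def by (metis disjoint_iff)
    then have "q \<noteq> 3 - x"
      using x by (auto simp: insert_commute)
    moreover have "\<not> 3 < q"
    proof
      assume "3 < q"
      then have "crosses {0,3} {x,q}"
        using x by (intro crosses_interleaved) auto
      then show False
        using dc \<open>{0,3} \<in> R\<close> q(2) unfolding disjoint_compatible_def by blast
    qed
    ultimately have "q \<in> {0,3}"
      using x q(1) by auto
    then show ?thesis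
      using q(2) by blast
  qed
  obtain q1 q2 where q1: "q1 \<in> {0,3}" "{1,q1} \<in> M'" and q2: "q2 \<in> {0,3}" "{2,q2} \<in> M'"
    using partner by blast
  have "q1 \<noteq> q2"
    using perfect_matching_on_unique[OF M' q1(2) q2(2), of q1] q1(1) by (auto simp: doubleton_eq_iff)
  moreover have "crosses {1,3} {2,0}"
    by (simp add: crosses_between_iff between_def)
  then have "\<not> (q1 = 3 \<and> q2 = 0)"
    using perfect_matching_on_not_crosses[OF M' q1(2) q2(2)] by (metis numeral_One)
  ultimately have "q1 = 0" "q2 = 3"
    using q1(1) q2(1) by auto
  then show "{0,1} \<in> M'" "{2,3} \<in> M'"
    using q1 q2 by (simp_all add: insert_commute)
qed

lemma has_partner_iff_block_removed:
  assumes R: "perfect_matching_on {..<n} R" and block: "{0,3} \<in> R" "{1,2} \<in> R"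
  shows "has_partner {..<n} R \<longleftrightarrow> has_partner {4..<n} (R - {{0,3},{1,2}})"
proof
  assume "has_partner {..<n} R"
  then obtain M' where M': "perfect_matching_on {..<n} M'" "disjoint_compatible R M'"
    unfolding has_partner_def by blast
  then have "{{0,1},{2,3}} \<subseteq> M'"
    using block_forces_ears_in_partner[OF R block] by blast
  then have "perfect_matching_on {4..<n} (M' - {{0,1},{2,3}})"
    by (rule perfect_matching_on_remove_first_four[OF M'(1) perfect_matching_on_four_points(1)])
  moreover have "disjoint_compatible (R - {{0,3},{1,2}}) (M' - {{0,1},{2,3}})"
    using M'(2) unfolding disjoint_compatible_def by blast
  ultimately show "has_partner {4..<n} (R - {{0,3},{1,2}})"
    unfolding has_partner_def by blast
next
  assume "has_partner {4..<n} (R - {{0,3},{1,2}})"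
  moreover have "{{0,3},{1,2}} \<subseteq> R"
    using block by blast
  ultimately show "has_partner {..<n} R"
    using has_partner_if_first_four_removed[OF R perfect_matching_on_four_points(2)]
      has_partner_four_points(2) by blast
qed

lemma has_partner_if_ears_removed:
  assumes R: "perfect_matching_on {..<n} R" and "{0,1} \<in> R" "{2,3} \<in> R"
    and "has_partner {4..<n} (R - {{0,1},{2,3}})"
  shows "has_partner {..<n} R"
  using assms has_partner_if_first_four_removed[OF R perfect_matching_on_four_points(1)]
    has_partner_four_points(1) by blast

lemma perfect_matching_on_single: "a \<noteq> b \<Longrightarrow> perfect_matching_on {a,b} {{a,b}}"
  by (rule perfect_matching_onI) (auto simp: crosses_irrefl)

text \<open>A partner of the matching with the ear \<open>{0,1}\<close> deleted becomes a partner of the whole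
  matching after moving the endpoint 2 of its chord at 2 to 0 and adding the chord \<open>{1,2}\<close>.\<close>

lemma has_partner_if_ear_removed:
  assumes R: "perfect_matching_on {..<n} R" and ears: "{0,1} \<in> R" "{2,3} \<in> R"
    and "has_partner {2..<n} (R - {{0,1}})"
  shows "has_partner {..<n} R"
proof -
  obtain L where L: "perfect_matching_on {2..<n} L" and dc: "disjoint_compatible (R - {{0,1}}) L"
    using assms(4) unfolding has_partner_def by blast
  have "3 < n"
    using perfect_matching_on_edge_subset[OF R ears(2)] by simp
  define \<sigma> where "\<sigma> p = (if p = 2 then 0 else p)" for p :: nat
  have "strict_mono_on {2..<n} \<sigma>"
    unfolding \<sigma>_def by (rule strict_mono_onI) auto
  then have \<sigma>: "preserves_crossing \<sigma> {2..<n}" "inj_on \<sigma> {2..<n}"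
    by (simp_all add: preserves_crossing_strict_mono_on strict_mono_on_imp_inj_on)
  have "\<sigma> ` {2..<n} = insert 0 {3..<n}"
    unfolding \<sigma>_def using \<open>3 < n\<close> by (auto simp: image_iff intro: bexI[of _ 2])
  then have L': "perfect_matching_on (insert 0 {3..<n}) (relabel \<sigma> L)"
    using relabel_perfect_matching_on[OF _ \<sigma>(1) L] \<sigma>(2) unfolding bij_betw_def by blast
  have \<sigma>_id: "\<sigma> ` e = e" if "2 \<notin> e" for e
    using that unfolding \<sigma>_def by force
  define M' where "M' = relabel \<sigma> L \<union> {{1,2}}"
  have "perfect_matching_on (insert 0 {3..<n} \<union> {1,2}) M'"
    unfolding M'_def using not_crosses_consecutive[where p=1]
    by (intro perfect_matching_on_Un[OF L' perfect_matching_on_single]) (auto simp: numeral_2_eq_2)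
  moreover have "insert 0 {3..<n} \<union> {1,2} = {..<n}"
    using \<open>3 < n\<close> by auto
  moreover have "disjoint_compatible R M'"
    unfolding disjoint_compatible_def
  proof (intro conjI ballI equals0I)
    fix e assume e: "e \<in> R \<inter> M'"
    show False
    proof (cases "e = {1,2}")
      case True
      then have "e = {0,1}"
        using e perfect_matching_on_unique[OF R _ ears(1), of e 1] by simp
      then show False
        using True by (simp add: doubleton_eq_iff)
    next
      case False
      then have "e \<in> relabel \<sigma> L"
        using e unfolding M'_def by blast
      then obtain g where g: "g \<in> L" "e = \<sigma> ` g"
        unfolding relabel_def by blast
      have "0 \<notin> e"
      proof
        assume "0 \<in> e"
        then have "1 \<in> e"
          using e perfect_matching_on_unique[OF R _ ears(1), of e 0] by simp
        moreover have "e \<subseteq> insert 0 {3..<n}"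
          using perfect_matching_on_edge_subset[OF L' \<open>e \<in> relabel \<sigma> L\<close>] .
        ultimately show False
          by auto
      qed
      moreover have "\<sigma> 2 = 0"
        unfolding \<sigma>_def by simp
      ultimately have "2 \<notin> g"
        using g(2) by force
      then have "e = g"
        using g(2) \<sigma>_id by simp
      then have "e \<in> (R - {{0,1}}) \<inter> L"
        using e g(1) \<open>0 \<notin> e\<close> by auto
      then show False
        using dc unfolding disjoint_compatible_def by blast
    qed
  next
    fix e f assume "e \<in> R" "f \<in> M'"
    show "\<not> crosses e f"
    proof (cases "e = {0,1} \<or> f = {1,2} \<or> e = {2,3}")
      case True
      then show ?thesis
        using not_crosses_consecutive[where p=0] not_crosses_consecutive[where p=1]
          not_crosses_consecutive[where p=2]
        by (auto simp: numeral_2_eq_2 numeral_3_eq_3)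
    next
      case False
      then have "f \<in> relabel \<sigma> L"
        using \<open>f \<in> M'\<close> unfolding M'_def by blast
      then obtain g where g: "g \<in> L" "f = \<sigma> ` g"
        unfolding relabel_def by blast
      obtain c d where g_cd: "g = {c,d}" "c \<in> {2..<n}" "d \<in> {2..<n}"
        using perfect_matching_on_edge[OF L g(1)] by blast
      obtain a b where e_ab: "e = {a,b}" "a < n" "b < n"
        using perfect_matching_on_edge[OF R \<open>e \<in> R\<close>] by blast
      have low: "x \<notin> e" if "x < 2" for x
      proof
        assume "x \<in> e"
        moreover have "x \<in> {0,1}"
          using that by auto
        ultimately show False
          using False perfect_matching_on_unique[OF R \<open>e \<in> R\<close> ears(1), of x] by blast
      qed
      then have "\<not> a < 2" "\<not> b < 2"
        using e_ab(1) by blast+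
      then have ab: "a \<in> {2..<n}" "b \<in> {2..<n}"
        using e_ab by simp_all
      have "2 \<notin> e"
        using False perfect_matching_on_unique[OF R \<open>e \<in> R\<close> ears(2), of 2] by auto
      then have "\<sigma> ` e = e"
        by (rule \<sigma>_id)
      then have "crosses f e \<longleftrightarrow> crosses (\<sigma> ` g) (\<sigma> ` e)"
        using g(2) by simp
      also have "\<dots> \<longleftrightarrow> crosses g e"
        using \<sigma>(1) ab g_cd e_ab unfolding preserves_crossing_def by simp
      finally have "crosses f e \<longleftrightarrow> crosses g e" .
      moreover have "e \<in> R - {{0,1}}"
        using False \<open>e \<in> R\<close> by blast
      then have "\<not> crosses e g"
        using dc g(1) unfolding disjoint_compatible_def by blast
      ultimately show ?thesis
        using crosses_commute[of e f] crosses_commute[of g e] by simp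
    qed
  qed
  ultimately show ?thesis
    unfolding has_partner_def by auto
qed


lemma partner_inside_chord:
  assumes M: "perfect_matching_on {..<n} M" and pq: "{p,q} \<in> M" "p < x" "x < q"
  obtains y where "{x,y} \<in> M" "y \<noteq> x" "p < y" "y < q"
proof -
  have "q < n"
    using perfect_matching_on_edge_subset[OF M pq(1)] by simp
  then obtain y where y: "y \<noteq> x" "y \<in> {..<n}" "{x,y} \<in> M"
    using perfect_matching_on_mate[OF M, of x] pq by auto
  have "y \<noteq> p" "y \<noteq> q"
    using perfect_matching_on_unique[OF M y(3) pq(1)] pq(2,3) by (auto simp: doubleton_eq_iff)
  moreover have "\<not> crosses {p,q} {x,y}"
    using perfect_matching_on_not_crosses[OF M pq(1) y(3)] .
  ultimately show thesis
    using that y pq(2,3) crosses_less_iff[of p q x y] by auto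
qed

lemma block_or_consecutive_ears:
  assumes M: "perfect_matching_on {..<n} M" and "4 \<le> n"
  shows "(\<exists>p. p + 3 < n \<and> {p, p + 3} \<in> M \<and> {p + 1, p + 2} \<in> M) \<or>
         (\<exists>a. a + 3 < n \<and> {a, a + 1} \<in> M \<and> {a + 2, a + 3} \<in> M)"
proof (cases "\<exists>p d. {p, p + d} \<in> M \<and> 1 < d")
  case False
  have partner_next: "{x, x + 1} \<in> M" if x: "x < n" and below: "\<forall>y<x. {x,y} \<notin> M" for x
  proof -
    obtain y where y: "y \<noteq> x" "{x,y} \<in> M"
      using perfect_matching_on_mate[OF M, of x] x by auto
    have "\<not> x + 1 < y"
    proof
      assume "x + 1 < y"
      then have "{x, x + (y - x)} \<in> M \<and> 1 < y - x"
        using y(2) by simp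
      then show False
        using False by blast
    qed
    moreover have "\<not> y < x"
      using below y(2) by blast
    ultimately have "y = x + 1"
      using y(1) by linarith
    then show ?thesis
      using y(2) by simp
  qed
  have "{0,1} \<in> M"
    using partner_next[of 0] \<open>4 \<le> n\<close> by simp
  moreover have "{2,3} \<in> M"
  proof -
    have "{2,y} \<notin> M" if "y < 2" for y
    proof
      assume "{2,y} \<in> M"
      moreover have "y \<in> {0,1}"
        using that by auto
      ultimately have "{2,y} = {0,1}"
        using perfect_matching_on_unique[OF M _ \<open>{0,1} \<in> M\<close>, of "{2,y}" y] by simp
      then show False
        by (simp add: doubleton_eq_iff)
    qed
    then show ?thesis
      using partner_next[of 2] \<open>4 \<le> n\<close> by simp
  qed
  ultimately show ?thesis
    using \<open>4 \<le> n\<close> by (intro disjI2 exI[of _ 0]) (simp add: numeral_2_eq_2)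
next
  case True
  define d where "d = (LEAST d. \<exists>p. {p, p + d} \<in> M \<and> 1 < d)"
  have "\<exists>d p. {p, p + d} \<in> M \<and> 1 < d"
    using True by blast
  then have "\<exists>p. {p, p + d} \<in> M \<and> 1 < d"
    unfolding d_def by (rule LeastI_ex)
  then obtain p where p: "{p, p + d} \<in> M" "1 < d"
    by blast
  have shortest: "d \<le> y - x" if "{x,y} \<in> M" "x + 1 < y" for x y
  proof -
    have "\<exists>p. {p, p + (y - x)} \<in> M \<and> 1 < y - x"
      using that by (intro exI[of _ x]) simp
    then show ?thesis
      unfolding d_def by (rule Least_le)
  qed
  have inner_ear: "{x, x + 1} \<in> M \<and> x + 1 < p + d"
    if x: "p < x" "x < p + d" and below: "\<forall>y\<in>{p<..<x}. {x,y} \<notin> M" for x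
  proof -
    obtain y where y: "{x,y} \<in> M" "y \<noteq> x" "p < y" "y < p + d"
      using partner_inside_chord[OF M p(1), of x] x by auto
    have "\<not> y < x"
      using below y by auto
    moreover have "\<not> x + 1 < y"
      using shortest[OF y(1)] x y by linarith
    ultimately have "y = x + 1"
      using y(2) by linarith
    then show ?thesis
      using y by simp
  qed
  have "p + d < n"
    using perfect_matching_on_edge_subset[OF M p(1)] by simp
  have "\<forall>y\<in>{p<..<p + 1}. {p + 1, y} \<notin> M"
    by auto
  then have A: "{p + 1, p + 2} \<in> M" "p + 2 < p + d"
    using inner_ear[of "p + 1"] p(2) by simp_all
  show ?thesis
  proof (cases "d = 3")
    case True
    then show ?thesis
      using p(1) A(1) \<open>p + d < n\<close> by (intro disjI1 exI[of _ p]) simp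
  next
    case False
    have "{p + 3, y} \<notin> M" if "y \<in> {p<..<p + 3}" for y
    proof
      assume "{p + 3, y} \<in> M"
      moreover have "y = p + 1 \<or> y = p + 2"
        using that by auto
      ultimately have "{p + 3, y} = {p + 1, p + 2}"
        using perfect_matching_on_unique[OF M _ A(1), of "{p + 3, y}" y] by auto
      then show False
        by (simp add: doubleton_eq_iff)
    qed
    then have "{p + 3, p + 4} \<in> M" "p + 4 < p + d"
      using inner_ear[of "p + 3"] A(2) False by (auto simp: add.commute)
    then show ?thesis
      using A(1) \<open>p + d < n\<close> by (intro disjI2 exI[of _ "p + 1"]) (simp add: numeral_eq_Suc)
  qed
qed

subsection \<open>Removing a block\<close>

lemma mod_add_modulus_diff:
  assumes "c \<le> x mod n"
  shows "(x + n - c) mod n = x mod n - (c::nat)"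
proof (cases "n = 0")
  case False
  have "x div n * n + x mod n = x"
    by (rule div_mult_mod_eq)
  then have "x + n - c = (x mod n - c) + Suc (x div n) * n"
    using assms by (simp add: algebra_simps; linarith)
  then have "(x + n - c) mod n = (x mod n - c) mod n"
    by (metis mod_mult_self1)
  also have "\<dots> = x mod n - c"
    using False by (simp add: le_less_trans[OF diff_le_self])
  finally show ?thesis .
qed simp

lemma relabel_block_edges:
  assumes "2 \<le> k" "i < 2*k"
  shows "relabel (\<lambda>p. (p + (2*k - i)) mod (2*k)) (block_edges k i) = {{0,3},{1,2}}"
proof -
  have "((i + j) mod (2*k) + (2*k - i)) mod (2*k) = j" if "j < 4" for j
    using rotate_back[OF assms(2), of j] that assms(1) by simp
  from this[of 0] this[of 1] this[of 2] this[of 3] show ?thesis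
    unfolding block_edges_def relabel_def by simp
qed

lemma remove_block_eq_relabel:
  assumes k: "2 \<le> k" and N: "perfect_matching_on {..<2*k} N" and i: "i < 2*k"
    and B: "block_edges k i \<subseteq> N"
  defines "\<rho> \<equiv> \<lambda>p. (p + (2*k - i)) mod (2*k)"
  shows "remove_block k i s N =
    relabel (\<lambda>p. (p + s) mod (2*k - 4)) (relabel (\<lambda>p. p - 4) (relabel \<rho> N - {{0,3},{1,2}}))"
proof -
  have R: "perfect_matching_on {..<2*k} (relabel \<rho> N)"
    using relabel_rotate(1)[OF N] unfolding \<rho>_def .
  have tail: "relabel \<rho> N - {{0,3},{1,2}} = relabel \<rho> (N - block_edges k i)"
    using relabel_diff[OF bij_betw_imp_inj_on[OF bij_betw_rotate] N, where S = "block_edges k i"] B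
      relabel_block_edges[OF k i] unfolding \<rho>_def by (simp add: Int_absorb1)
  have "relabel \<rho> (block_edges k i) \<subseteq> relabel \<rho> N"
    unfolding relabel_def using B by (rule image_mono)
  then have "{{0,3},{1,2}} \<subseteq> relabel \<rho> N"
    using relabel_block_edges[OF k i] unfolding \<rho>_def by simp
  then have "perfect_matching_on {4..<2*k} (relabel \<rho> (N - block_edges k i))"
    using perfect_matching_on_remove_first_four[OF R perfect_matching_on_four_points(2)] tail by simp
  moreover have "\<rho> ` e \<in> relabel \<rho> (N - block_edges k i)" if "e \<in> N - block_edges k i" for e
    using that unfolding relabel_def by (rule imageI)
  ultimately have in_tail: "\<rho> ` e \<subseteq> {4..<2*k}" if "e \<in> N - block_edges k i" for e
    using perfect_matching_on_edge_subset that by blast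
  have shrink_eq: "shrink k i s p = (\<rho> p - 4 + s) mod (2*k - 4)" if "4 \<le> \<rho> p" for p
  proof -
    have "p + 4*k - i - 4 = (p + (2*k - i)) + 2*k - 4"
      using i k by simp
    then show ?thesis
      using mod_add_modulus_diff[of 4 "p + (2*k - i)" "2*k"] that unfolding shrink_def \<rho>_def by simp
  qed
  have "remove_block k i s N = relabel (shrink k i s) (N - block_edges k i)"
    unfolding remove_block_def relabel_def ..
  also have "\<dots> = relabel ((\<lambda>p. (p + s) mod (2*k - 4)) \<circ> (\<lambda>p. p - 4) \<circ> \<rho>) (N - block_edges k i)"
    unfolding relabel_def
  proof (rule image_cong[OF refl], rule image_cong[OF refl])
    fix e p assume "e \<in> N - block_edges k i" "p \<in> e"
    then show "shrink k i s p = ((\<lambda>p. (p + s) mod (2*k - 4)) \<circ> (\<lambda>p. p - 4) \<circ> \<rho>) p"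
      using in_tail shrink_eq by fastforce
  qed
  finally show ?thesis
    unfolding tail relabel_relabel comp_assoc .
qed

lemma remove_block:
  assumes k: "2 \<le> k" and N: "perfect_matching_on {..<2*k} N" and i: "i < 2*k"
    and B: "block_edges k i \<subseteq> N"
  shows "perfect_matching_on {..<2*(k-2)} (remove_block k i s N)"
    and "has_partner {..<2*(k-2)} (remove_block k i s N) \<longleftrightarrow> has_partner {..<2*k} N"
proof -
  define R where "R = relabel (\<lambda>p. (p + (2*k - i)) mod (2*k)) N"
  have R: "perfect_matching_on {..<2*k} R" "has_partner {..<2*k} R \<longleftrightarrow> has_partner {..<2*k} N"
    unfolding R_def using relabel_rotate[OF N] by simp_all
  have "relabel (\<lambda>p. (p + (2*k - i)) mod (2*k)) (block_edges k i) \<subseteq> R"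
    unfolding R_def relabel_def using B by (rule image_mono)
  then have block: "{0,3} \<in> R" "{1,2} \<in> R"
    using relabel_block_edges[OF k i] by simp_all
  then have "perfect_matching_on {4..<2*k} (R - {{0,3},{1,2}})"
    using perfect_matching_on_remove_first_four[OF R(1) perfect_matching_on_four_points(2)] by simp
  note shifted = relabel_shift_down[OF this]
  have eq: "remove_block k i s N =
      relabel (\<lambda>p. (p + s) mod (2*k - 4)) (relabel (\<lambda>p. p - 4) (R - {{0,3},{1,2}}))"
    unfolding R_def by (rule remove_block_eq_relabel[OF k N i B])
  have "2*(k-2) = 2*k - 4"
    by simp
  then show "perfect_matching_on {..<2*(k-2)} (remove_block k i s N)"
    and "has_partner {..<2*(k-2)} (remove_block k i s N) \<longleftrightarrow> has_partner {..<2*k} N"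
    unfolding eq using relabel_rotate[OF shifted(1)] shifted(2) R(2)
      has_partner_iff_block_removed[OF R(1) block] by simp_all
qed

lemma isolated_without_consecutive_ears:
  assumes M: "perfect_matching_on {..<n} M" and a: "a + 3 < n"
    and ears: "{a, a + 1} \<in> M" "{a + 2, a + 3} \<in> M" and isolated: "\<not> has_partner {..<n} M"
  shows "\<exists>M'. perfect_matching_on {..<n - 4} M' \<and> \<not> has_partner {..<n - 4} M'"
    and "\<exists>M'. perfect_matching_on {..<n - 2} M' \<and> \<not> has_partner {..<n - 2} M'"
proof -
  define \<rho> where "\<rho> p = (p + (n - a)) mod n" for p
  define R where "R = relabel \<rho> M"
  have R: "perfect_matching_on {..<n} R" "\<not> has_partner {..<n} R"
    unfolding R_def \<rho>_def using relabel_rotate[OF M] isolated by simp_all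
  have "\<rho> (a + j) = j" if "j < 4" for j
    using rotate_back[of a n j] a that unfolding \<rho>_def by simp
  from this[of 0] this[of 1] this[of 2] this[of 3]
  have "\<rho> ` {a, a + 1} = {0,1}" "\<rho> ` {a + 2, a + 3} = {2,3}"
    by simp_all
  then have R_ears: "{0,1} \<in> R" "{2,3} \<in> R"
    using ears unfolding R_def relabel_def by (metis imageI)+
  have "perfect_matching_on {4..<n} (R - {{0,1},{2,3}})"
    using perfect_matching_on_remove_first_four[OF R(1) perfect_matching_on_four_points(1)] R_ears
    by simp
  moreover have "\<not> has_partner {4..<n} (R - {{0,1},{2,3}})"
    using has_partner_if_ears_removed[OF R(1) R_ears] R(2) by blast
  ultimately show "\<exists>M'. perfect_matching_on {..<n - 4} M' \<and> \<not> has_partner {..<n - 4} M'"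
    using relabel_shift_down by blast
  have "{..<n} - \<Union>{{0,1}} = {2..<n}"
    by auto
  then have "perfect_matching_on {2..<n} (R - {{0,1}})"
    using perfect_matching_on_diff[OF R(1), of "{{0,1}}"] R_ears by simp
  moreover have "\<not> has_partner {2..<n} (R - {{0,1}})"
    using has_partner_if_ear_removed[OF R(1) R_ears] R(2) by blast
  ultimately show "\<exists>M'. perfect_matching_on {..<n - 2} M' \<and> \<not> has_partner {..<n - 2} M'"
    using relabel_shift_down by blast
qed

lemma I_matching_odd: "I_matching k M \<Longrightarrow> odd k"
  by (induction rule: I_matching.induct) simp_all

lemma perfect_matching_on_two_points:
  assumes M: "perfect_matching_on {..<2} M"
  shows "M = {{0,1}}"
proof -
  have "e = {0,1}" if e: "e \<in> M" for e
  proof -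
    obtain a b where "a \<noteq> b" "a < 2" "b < 2" "e = {a,b}"
      using perfect_matching_on_edge[OF M e] by auto
    then show ?thesis
      by (auto simp: less_2_cases_iff)
  qed
  moreover obtain e where "e \<in> M"
    using perfect_matching_on_cover[OF M, of 0] by auto
  ultimately show ?thesis
    by blast
qed

lemma I_matching_no_partner: "I_matching k M \<Longrightarrow> \<not> has_partner {..<2*k} M"
proof (induction rule: I_matching.induct)
  case base
  show ?case
  proof
    assume "has_partner {..<2*1} {{0,1}}"
    then obtain M' where "perfect_matching_on {..<2} M'" "disjoint_compatible {{0,1}} M'"
      unfolding has_partner_def by auto
    then show False
      using perfect_matching_on_two_points unfolding disjoint_compatible_def by blast
  qed
next
  case (step k N i s)
  then show ?case
    using remove_block[of k N i s] is_matching_iff by simp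
qed

lemma has_partner_empty: "has_partner {} M"
  unfolding has_partner_def disjoint_compatible_def using perfect_matching_on_empty by blast

lemma no_partner_I_matching:
  "perfect_matching_on {..<2*k} M \<Longrightarrow> \<not> has_partner {..<2*k} M \<Longrightarrow> I_matching k M"
proof (induction k arbitrary: M rule: less_induct)
  case (less k)
  consider "k = 0" | "k = 1" | "2 \<le> k"
    by linarith
  then show ?case
  proof cases
    case 1
    then show ?thesis
      using less.prems(2) has_partner_empty by simp
  next
    case 2
    then show ?thesis
      using perfect_matching_on_two_points less.prems(1) I_matching.base by simp
  next
    case 3
    have sizes: "2*k - 4 = 2*(k - 2)" "2*k - 2 = 2*(k - 1)" "k - 2 < k" "k - 1 < k"
      using 3 by simp_all
    have "4 \<le> 2*k"
      using 3 by simp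
    from block_or_consecutive_ears[OF less.prems(1) this] show ?thesis
    proof (elim disjE exE conjE)
      fix p assume p: "p + 3 < 2*k" "{p, p + 3} \<in> M" "{p + 1, p + 2} \<in> M"
      then have B: "block_edges k p \<subseteq> M"
        unfolding block_edges_def by simp
      have "p < 2*k"
        using p(1) by simp
      then have smaller: "I_matching (k - 2) (remove_block k p 0 M)"
        using less.IH[OF sizes(3)] remove_block[OF 3 less.prems(1) _ B, of 0] less.prems(2)
        by simp
      then have "odd (k - 2)"
        by (rule I_matching_odd)
      then have "odd k" "3 \<le> k"
        using 3 by presburger+
      moreover have "is_matching k M"
        using less.prems(1) is_matching_iff by simp
      ultimately show ?thesis
        using I_matching.step \<open>p < 2*k\<close> B smaller by blast
    next
      fix a assume "a + 3 < 2*k" "{a, a + 1} \<in> M" "{a + 2, a + 3} \<in> M"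
      note smaller = isolated_without_consecutive_ears[OF less.prems(1) this less.prems(2)]
      obtain M4 M2 where "I_matching (k - 2) M4" "I_matching (k - 1) M2"
        using smaller less.IH[OF sizes(3)] less.IH[OF sizes(4)] unfolding sizes(1,2) by blast
      then have "odd (k - 2)" "odd (k - 1)"
        by (blast dest: I_matching_odd)+
      then show ?thesis
        using 3 by presburger
    qed
  qed
qed

lemma isolated_DCM_iff_I_matching:
  assumes "is_matching k M"
  shows "isolated_DCM k M \<longleftrightarrow> I_matching k M"
  using assms I_matching_no_partner no_partner_I_matching
  unfolding isolated_DCM_iff is_matching_iff by blast

theorem mainTheorem11:
  fixes k :: nat and M :: "nat set set"
  assumes "odd k" and "is_matching k M"
  shows "isolated_DCM k M \<longleftrightarrow> I_matching k M"
  using isolated_DCM_iff_I_matching[OF assms(2)] .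

end
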